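(* Let $a,b>0$ with $a+b\leq1$, let $c\geq0$, and let $$B_{a,b}(x)={}_2F_1(a,b;a+b;x)-\frac{a(a+1)b(b+1)}{(a+b)(a+b+1)}\,{}_2F_1(a,b;a+b+2;x)\,\big(c-\log(1-x)\big).$$ Then $\big(-B_{a,b}'\big)^{(n)}(x)>0$ for all $n\geq0$ and all $x\in(0,1)$.
   Context: ${}_2F_1$ is the Gauss hypergeometric function. *)

theory Defs
  imports "HOL-Analysis.Analysis"
begin

definition hyp2F1 :: "real \<Rightarrow> real \<Rightarrow> real \<Rightarrow> real \<Rightarrow> real" where
  "hyp2F1 a b c x =
     (\<Sum>n. pochhammer a n * pochhammer b n / (pochhammer c n * fact n) * x ^ n)"

end

theory Submission
  imports Defs "HOL-Real_Asymp.Real_Asymp"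
begin

(* Write F = 2F1(a,b;a+b;x) = sum f_n x^n, G = 2F1(a,b;a+b+2;x) = sum g_n x^n and
   K = a(a+1)b(b+1)/((a+b)(a+b+1)).  On the unit disc
     -B' = K G' (c - ln(1-x)) + K G/(1-x) - F'
   is a power series.  As c >= 0 and -ln(1-x) = sum x^n/n, the first summand has nonnegative
   coefficients; the coefficient of x^n in the rest is K (g_0 + ... + g_n) - (n+1) f_(n+1), and a
   telescoping computation gives K (g_0 + ... + g_n) = (n+1) f_(n+1) (1 + ab/(a+b+n+1)).
   So all coefficients of -B' are positive, hence so are all its derivatives on (0,1). *)

lemma fps_conv_radius_add_geI:
  "r \<le> fps_conv_radius f \<Longrightarrow> r \<le> fps_conv_radius g \<Longrightarrow> r \<le> fps_conv_radius (f + g)"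
  using fps_conv_radius_add[of f g] by (meson min.boundedI order_trans)

lemma fps_conv_radius_diff_geI:
  "r \<le> fps_conv_radius f \<Longrightarrow> r \<le> fps_conv_radius g \<Longrightarrow> r \<le> fps_conv_radius (f - g)"
  using fps_conv_radius_diff[of f g] by (meson min.boundedI order_trans)

lemma fps_conv_radius_mult_geI:
  fixes f g :: "'a :: {banach, real_normed_div_algebra, comm_ring_1} fps"
  shows "r \<le> fps_conv_radius f \<Longrightarrow> r \<le> fps_conv_radius g \<Longrightarrow> r \<le> fps_conv_radius (f * g)"
  using fps_conv_radius_mult[of f g] by (meson min.boundedI order_trans)

lemma fps_conv_radius_funpow_deriv:
  fixes f :: "'a :: {banach, real_normed_field} fps"
  shows "fps_conv_radius f \<le> fps_conv_radius ((fps_deriv ^^ n) f)"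
  by (induction n) (auto intro: order_trans fps_conv_radius_deriv)

lemma higher_deriv_eval_fps:
  fixes f :: "'a :: {banach, real_normed_field} fps"
  assumes "norm z < fps_conv_radius f"
  shows "(deriv ^^ n) (eval_fps f) z = eval_fps ((fps_deriv ^^ n) f) z"
  using assms
proof (induction n arbitrary: z)
  case (Suc n)
  have "\<forall>\<^sub>F w in nhds z. w \<in> eball 0 (fps_conv_radius f)"
    using Suc.prems by (intro eventually_nhds_in_open) auto
  then have "\<forall>\<^sub>F w in nhds z. (deriv ^^ n) (eval_fps f) w = eval_fps ((fps_deriv ^^ n) f) w"
    by eventually_elim (simp add: Suc.IH)
  then have "deriv ((deriv ^^ n) (eval_fps f)) z = deriv (eval_fps ((fps_deriv ^^ n) f)) z"
    by (rule deriv_cong_ev) simp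
  also have "\<dots> = eval_fps (fps_deriv ((fps_deriv ^^ n) f)) z"
    using Suc.prems fps_conv_radius_funpow_deriv[of f n]
    by (intro eval_fps_deriv[symmetric]) (rule less_le_trans)
  finally show ?case
    by simp
qed simp

lemma higher_deriv_eq_eval_fps:
  fixes f :: "'a :: {banach, real_normed_field} fps"
  assumes "ereal R \<le> fps_conv_radius f" "\<And>w. norm w < R \<Longrightarrow> g w = eval_fps f w"
    and "norm z < R"
  shows "(deriv ^^ n) g z = eval_fps ((fps_deriv ^^ n) f) z"
proof -
  have "\<forall>\<^sub>F w in nhds z. w \<in> ball 0 R"
    using assms(3) by (intro eventually_nhds_in_open) auto
  then have "\<forall>\<^sub>F w in nhds z. g w = eval_fps f w"
    by eventually_elim (simp add: assms(2))
  then have "(deriv ^^ n) g z = (deriv ^^ n) (eval_fps f) z"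
    by (rule higher_deriv_cong_ev) simp
  also have "\<dots> = eval_fps ((fps_deriv ^^ n) f) z"
    using assms(3) by (intro higher_deriv_eval_fps less_le_trans[OF _ assms(1)]) simp
  finally show ?thesis .
qed

lemma fps_nth_funpow_deriv_pos:
  fixes f :: "real fps"
  assumes "\<And>k. 0 < fps_nth f k"
  shows "0 < fps_nth ((fps_deriv ^^ n) f) k"
  using assms by (induction n arbitrary: k) auto

lemma eval_fps_pos:
  fixes f :: "real fps"
  assumes "\<And>k. 0 < fps_nth f k" "0 < x" "ereal x < fps_conv_radius f"
  shows "0 < eval_fps f x"
  unfolding eval_fps_def
  using assms by (intro suminf_pos summable_fps) auto

lemma higher_deriv_pos_of_fps_nth_pos:
  fixes f :: "real fps"
  assumes "ereal R \<le> fps_conv_radius f" "\<And>x. \<bar>x\<bar> < R \<Longrightarrow> g x = eval_fps f x"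
    and "\<And>k. 0 < fps_nth f k" "0 < x" "x < R"
  shows "0 < (deriv ^^ n) g x"
proof -
  have "(deriv ^^ n) g x = eval_fps ((fps_deriv ^^ n) f) x"
    using assms(1,2,4,5) by (intro higher_deriv_eq_eval_fps[where R = R]) auto
  also have "ereal x < fps_conv_radius ((fps_deriv ^^ n) f)"
    using assms(5)
    by (intro less_le_trans[OF _ order_trans[OF assms(1) fps_conv_radius_funpow_deriv]]) simp
  then have "eval_fps ((fps_deriv ^^ n) f) x > 0"
    using assms(3,4) by (intro eval_fps_pos fps_nth_funpow_deriv_pos)
  finally show ?thesis .
qed

lemma fps_nth_mult_nonneg:
  fixes f g :: "'a :: linordered_semiring fps"
  assumes "\<And>k. 0 \<le> fps_nth f k" "\<And>k. 0 \<le> fps_nth g k"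
  shows "0 \<le> fps_nth (f * g) n"
  using assms by (simp add: fps_mult_nth sum_nonneg)

(* The series of -ln(1 - x); its constant coefficient is 1 / 0 = 0. *)
definition neg_ln_one_minus_fps :: "real fps" where
  "neg_ln_one_minus_fps = Abs_fps (\<lambda>n. 1 / real n)"

lemma fps_conv_radius_neg_ln_one_minus_fps: "fps_conv_radius neg_ln_one_minus_fps = 1"
proof -
  have "(\<lambda>n. norm (1 / real n) / norm (1 / real (Suc n))) = (\<lambda>n. (n + 1) / n)"
    by (simp add: field_simps)
  also have "\<dots> \<longlonglongrightarrow> 1"
    by real_asymp
  finally show ?thesis
    unfolding fps_conv_radius_def neg_ln_one_minus_fps_def
    by (intro conv_radius_ratio_limit[of _ 1])
      (auto simp: eventually_at_top_linorder intro: exI[of _ 1])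
qed

lemma eval_neg_ln_one_minus_fps:
  assumes "\<bar>x\<bar> < 1"
  shows "eval_fps neg_ln_one_minus_fps x = - ln (1 - x)"
proof -
  have "(\<lambda>n. - ((- (- x)) ^ n) / real n) sums ln (1 + - x)"
    using assms by (intro ln_series') simp
  then have "(\<lambda>n. 1 / real n * x ^ n) sums - ln (1 - x)"
    using sums_minus by fastforce
  then show ?thesis
    by (simp add: eval_fps_def neg_ln_one_minus_fps_def sums_iff)
qed

lemma fps_deriv_neg_ln_one_minus_fps: "fps_deriv neg_ln_one_minus_fps = Abs_fps (\<lambda>_. 1)"
  by (simp add: neg_ln_one_minus_fps_def fps_eq_iff del: of_nat_Suc)

definition hyp2F1_coeff :: "real \<Rightarrow> real \<Rightarrow> real \<Rightarrow> nat \<Rightarrow> real" where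
  "hyp2F1_coeff a b c n = pochhammer a n * pochhammer b n / (pochhammer c n * fact n)"

definition hyp2F1_fps :: "real \<Rightarrow> real \<Rightarrow> real \<Rightarrow> real fps" where
  "hyp2F1_fps a b c = Abs_fps (hyp2F1_coeff a b c)"

lemma hyp2F1_eq_eval_fps: "hyp2F1 a b c x = eval_fps (hyp2F1_fps a b c) x"
  by (simp add: hyp2F1_def eval_fps_def hyp2F1_fps_def hyp2F1_coeff_def)

lemma hyp2F1_coeff_pos: "a > 0 \<Longrightarrow> b > 0 \<Longrightarrow> c > 0 \<Longrightarrow> hyp2F1_coeff a b c n > 0"
  unfolding hyp2F1_coeff_def by (intro divide_pos_pos mult_pos_pos pochhammer_pos) auto

lemma hyp2F1_coeff_Suc:
  assumes "c > 0"
  shows "hyp2F1_coeff a b c (Suc n) = hyp2F1_coeff a b c n * ((a + n) * (b + n) / ((c + n) * (n + 1)))"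
proof -
  have "pochhammer c n > 0" using assms by (rule pochhammer_pos)
  with assms show ?thesis
    by (simp add: hyp2F1_coeff_def pochhammer_Suc field_simps)
qed

lemma hyp2F1_coeff_add2:
  assumes "c > 0"
  shows "hyp2F1_coeff a b (c + 2) n = hyp2F1_coeff a b c n * (c * (c + 1) / ((c + n) * (c + n + 1)))"
proof -
  have "pochhammer c n * (c + n) * (c + n + 1) = pochhammer c (Suc (Suc n))"
    by (simp add: pochhammer_Suc add.assoc)
  also have "\<dots> = c * (c + 1) * pochhammer (c + 2) n"
    by (simp add: pochhammer_rec add.assoc)
  moreover have "c * (c + 1) > 0"
    using assms by simp
  ultimately have "pochhammer (c + 2) n = pochhammer c n * ((c + n) * (c + n + 1) / (c * (c + 1)))"
    by (simp add: field_simps)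
  then show ?thesis
    using assms by (simp add: hyp2F1_coeff_def)
qed

lemma fps_conv_radius_hyp2F1_fps:
  assumes "a > 0" "b > 0" "c > 0"
  shows "fps_conv_radius (hyp2F1_fps a b c) = 1"
proof -
  have ratio: "hyp2F1_coeff a b c n / hyp2F1_coeff a b c (Suc n)
      = (c + n) * (n + 1) / ((a + n) * (b + n))" for n
    using hyp2F1_coeff_pos[OF assms, of n] assms by (simp add: hyp2F1_coeff_Suc)
  have "(\<lambda>n. norm (hyp2F1_coeff a b c n) / norm (hyp2F1_coeff a b c (Suc n)))
        = (\<lambda>n. (c + n) * (n + 1) / ((a + n) * (b + n)))"
    using assms by (simp add: ratio abs_of_pos hyp2F1_coeff_pos add.commute)
  also have "\<dots> \<longlonglongrightarrow> 1"
    by real_asymp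
  finally show ?thesis
    unfolding fps_conv_radius_def hyp2F1_fps_def
    by (intro conv_radius_ratio_limit_nonzero[of _ 1]) simp_all
qed

lemma hyp2F1_coeff_sum_add2_step:
  fixes a b m u D :: real
  assumes D: "D = a + b + m" and "D > 0"
  shows "m * u * (1 + a * b / D) + u * (a * (a + 1) * b * (b + 1)) / (D * (D + 1))
    = u * (a + m) * (b + m) / D * (1 + a * b / (D + 1))"
proof -
  have "D \<noteq> 0" "D + 1 \<noteq> 0" "D * (D + 1) \<noteq> 0"
    using \<open>D > 0\<close> by simp_all
  then show ?thesis
    by (simp add: divide_simps) (simp add: D algebra_simps)
qed

lemma hyp2F1_coeff_sum_add2:
  fixes a b :: real
  assumes "a > 0" "b > 0"
  defines "s \<equiv> a + b"
  defines "K \<equiv> a * (a + 1) * b * (b + 1) / (s * (s + 1))"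
  shows "K * (\<Sum>i\<le>n. hyp2F1_coeff a b (s + 2) i)
         = (n + 1) * hyp2F1_coeff a b s (Suc n) * (1 + a * b / (s + n + 1))"
proof (induction n)
  case 0
  with assms show ?case by (simp add: hyp2F1_coeff_def field_simps)
next
  case (Suc n)
  define m where "m = real (Suc n)"
  define u where "u = hyp2F1_coeff a b s (Suc n)"
  have s: "s > 0" using assms by (simp add: s_def)
  have "m + 1 \<noteq> 0"
    by (simp add: m_def add_pos_pos)
  have IH: "K * (\<Sum>i\<le>n. hyp2F1_coeff a b (s + 2) i) = m * u * (1 + a * b / (s + m))"
    using Suc.IH by (simp add: m_def u_def add_ac)
  have new_term: "K * hyp2F1_coeff a b (s + 2) (Suc n)
      = u * (a * (a + 1) * b * (b + 1)) / ((s + m) * (s + m + 1))"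
    using s by (simp add: hyp2F1_coeff_add2 K_def u_def m_def)
  have "K * (\<Sum>i\<le>Suc n. hyp2F1_coeff a b (s + 2) i)
      = m * u * (1 + a * b / (s + m)) + u * (a * (a + 1) * b * (b + 1)) / ((s + m) * (s + m + 1))"
    by (simp add: distrib_left IH new_term)
  also have "\<dots> = u * (a + m) * (b + m) / (s + m) * (1 + a * b / (s + m + 1))"
    using s by (intro hyp2F1_coeff_sum_add2_step) (simp_all add: s_def m_def)
  also have "\<dots> = (m + 1) * hyp2F1_coeff a b s (Suc (Suc n)) * (1 + a * b / (s + (m + 1)))"
    unfolding hyp2F1_coeff_Suc[OF s, of a b "Suc n"] u_def[symmetric]
    using \<open>m + 1 \<noteq> 0\<close> by (simp add: m_def add.assoc)
  finally show ?case
    by (simp add: m_def add.assoc)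
qed

definition B_fps :: "real \<Rightarrow> real \<Rightarrow> real \<Rightarrow> real fps" where
  "B_fps a b c = hyp2F1_fps a b (a + b)
     - fps_const (a * (a + 1) * b * (b + 1) / ((a + b) * (a + b + 1))) * hyp2F1_fps a b (a + b + 2)
       * (fps_const c + neg_ln_one_minus_fps)"

lemma fps_conv_radius_B_fps:
  assumes "a > 0" "b > 0"
  shows "1 \<le> fps_conv_radius (B_fps a b c)"
  unfolding B_fps_def using assms
  by (intro fps_conv_radius_diff_geI fps_conv_radius_mult_geI fps_conv_radius_add_geI)
    (simp_all add: fps_conv_radius_hyp2F1_fps fps_conv_radius_neg_ln_one_minus_fps)

lemma eval_B_fps:
  assumes "a > 0" "b > 0" "\<bar>x\<bar> < 1"
  shows "eval_fps (B_fps a b c) x = hyp2F1 a b (a + b) x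
      - a * (a + 1) * b * (b + 1) / ((a + b) * (a + b + 1)) * hyp2F1 a b (a + b + 2) x * (c - ln (1 - x))"
proof -
  define K where "K = a * (a + 1) * b * (b + 1) / ((a + b) * (a + b + 1))"
  define F where "F = hyp2F1_fps a b (a + b)"
  define G where "G = hyp2F1_fps a b (a + b + 2)"
  define L where "L = fps_const c + neg_ln_one_minus_fps"
  have inside: "norm x < fps_conv_radius f" if "1 \<le> fps_conv_radius f" for f :: "real fps"
    using assms(3) by (intro less_le_trans[OF _ that]) simp
  have "1 \<le> fps_conv_radius F" "1 \<le> fps_conv_radius G"
    and "1 \<le> fps_conv_radius L" "1 \<le> fps_conv_radius (fps_const K * G)"
    and "1 \<le> fps_conv_radius (fps_const K * G * L)"
    using assms(1,2) unfolding F_def G_def L_def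
    by (auto intro!: fps_conv_radius_add_geI fps_conv_radius_mult_geI
        simp: fps_conv_radius_hyp2F1_fps fps_conv_radius_neg_ln_one_minus_fps)
  note F = inside[OF this(1)] and G = inside[OF this(2)]
    and L = inside[OF this(3)] and KG = inside[OF this(4)] and KGL = inside[OF this(5)]
  have "eval_fps (B_fps a b c) x = eval_fps F x - K * eval_fps G x * eval_fps L x"
    unfolding B_fps_def K_def[symmetric] F_def[symmetric] G_def[symmetric] L_def[symmetric]
    by (simp add: eval_fps_diff[OF F KGL] eval_fps_mult[OF KG L] eval_fps_mult[OF _ G])
  also have "eval_fps L x = c - ln (1 - x)"
    unfolding L_def using assms(3)
    by (simp add: eval_fps_add eval_neg_ln_one_minus_fps fps_conv_radius_neg_ln_one_minus_fps)
  finally show ?thesis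
    by (simp add: K_def F_def G_def hyp2F1_eq_eval_fps)
qed

lemma fps_nth_neg_deriv_B_fps_pos:
  assumes "a > 0" "b > 0" "c \<ge> 0"
  shows "0 < fps_nth (- fps_deriv (B_fps a b c)) k"
proof -
  define s where "s = a + b"
  define K where "K = a * (a + 1) * b * (b + 1) / (s * (s + 1))"
  define G where "G = hyp2F1_fps a b (s + 2)"
  define L where "L = fps_const c + neg_ln_one_minus_fps"
  have "s > 0" "K > 0"
    using assms by (simp_all add: s_def K_def)
  have "- fps_deriv (B_fps a b c) = fps_const K * (fps_deriv G * L)
      + (fps_const K * (G * Abs_fps (\<lambda>_. 1)) - fps_deriv (hyp2F1_fps a b s))"
    by (simp add: B_fps_def fps_deriv_neg_ln_one_minus_fps s_def K_def G_def L_def algebra_simps)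
  then have "fps_nth (- fps_deriv (B_fps a b c)) k
      = K * fps_nth (fps_deriv G * L) k
        + (K * fps_nth (G * Abs_fps (\<lambda>_. 1)) k - fps_nth (fps_deriv (hyp2F1_fps a b s)) k)"
    by (simp only: fps_add_nth fps_sub_nth fps_mult_left_const_nth)
  also have "fps_nth (G * Abs_fps (\<lambda>_. 1)) k = (\<Sum>i\<le>k. hyp2F1_coeff a b (s + 2) i)"
    by (simp add: fps_mult_nth atLeast0AtMost G_def hyp2F1_fps_def)
  also have "K * (\<Sum>i\<le>k. hyp2F1_coeff a b (s + 2) i) - fps_nth (fps_deriv (hyp2F1_fps a b s)) k
      = (k + 1) * hyp2F1_coeff a b s (Suc k) * (a * b / (s + k + 1))"
    using hyp2F1_coeff_sum_add2[OF assms(1,2), of k]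
    by (simp add: s_def K_def hyp2F1_fps_def algebra_simps)
  finally have nth: "fps_nth (- fps_deriv (B_fps a b c)) k
      = K * fps_nth (fps_deriv G * L) k + (k + 1) * hyp2F1_coeff a b s (Suc k) * (a * b / (s + k + 1))" .
  have "0 \<le> fps_nth (fps_deriv G * L) k"
    using assms \<open>s > 0\<close>
    by (intro fps_nth_mult_nonneg)
      (simp_all add: G_def L_def hyp2F1_fps_def neg_ln_one_minus_fps_def less_imp_le hyp2F1_coeff_pos)
  moreover have "0 < (k + 1) * hyp2F1_coeff a b s (Suc k) * (a * b / (s + k + 1))"
    using assms \<open>s > 0\<close> by (simp add: hyp2F1_coeff_pos)
  ultimately show ?thesis
    unfolding nth using \<open>K > 0\<close> by (intro add_nonneg_pos mult_nonneg_nonneg) simp_all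
qed

theorem lemma9:
  fixes a b c :: real
  assumes "a > 0" and "b > 0" and "a + b \<le> 1" and "c \<ge> 0"
  defines "B \<equiv> (\<lambda>x. hyp2F1 a b (a + b) x
      - (a * (a + 1) * b * (b + 1)) / ((a + b) * (a + b + 1))
        * hyp2F1 a b (a + b + 2) x * (c - ln (1 - x)))"
  shows "\<forall>n::nat. \<forall>x \<in> {0<..<1::real}.
           (deriv ^^ n) (\<lambda>t. - deriv B t) x > 0"
proof (intro allI ballI)
  fix n :: nat and x :: real
  assume x: "x \<in> {0<..<1}"
  have radius: "1 \<le> fps_conv_radius (B_fps a b c)"
    using assms(1,2) by (rule fps_conv_radius_B_fps)
  have B_eq: "B t = eval_fps (B_fps a b c) t" if "norm t < 1" for t
    unfolding B_def using eval_B_fps[OF assms(1,2), of t] that by simp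
  have "- deriv B t = eval_fps (- fps_deriv (B_fps a b c)) t" if "\<bar>t\<bar> < 1" for t
  proof -
    have "deriv B t = eval_fps (fps_deriv (B_fps a b c)) t"
      using higher_deriv_eq_eval_fps[where n = 1 and R = 1, OF _ B_eq] radius that
      by (simp add: one_ereal_def)
    moreover have "ereal (norm t) < fps_conv_radius (fps_deriv (B_fps a b c))"
      using that by (intro less_le_trans[OF _ order_trans[OF radius fps_conv_radius_deriv]]) simp
    ultimately show ?thesis
      by (simp add: eval_fps_minus)
  qed
  moreover have "1 \<le> fps_conv_radius (- fps_deriv (B_fps a b c))"
    using radius fps_conv_radius_deriv[of "B_fps a b c"] by simp
  ultimately show "(deriv ^^ n) (\<lambda>t. - deriv B t) x > 0"
    using x assms(1,2,4) fps_nth_neg_deriv_B_fps_pos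
    by (intro higher_deriv_pos_of_fps_nth_pos[where R = 1]) (auto simp: one_ereal_def)
qed

end
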